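(* Let $n=2k$ with $k\ge 2$. If $lmd(S_n)=2$, then no local metric basis $W$ of $S_n$ consists of one vertex of $C_i$ and one vertex of $C_j$ with $i\neq j$, $i,j\in\{a,b,c,d\}$.
   Context: For $n\ge 3$, $S_n$ is the graph with vertex set $\{a_i,b_i,c_i,d_i : 1\le i\le n\}$ and edge set $\{a_ia_{i+1}, b_ib_{i+1}, c_ic_{i+1}, d_id_{i+1}, a_{i+1}b_i, a_ib_i, b_ic_i, c_id_i : 1\le i\le n\}$, indices taken modulo $n$. For $i\in\{a,b,c,d\}$, $C_i$ is the cycle induced by $i_1,\ldots,i_n$. A vertex $w$ resolves $u,v$ if $d(u,w)\neq d(v,w)$ ($d$ the graph distance). A local resolving set is a vertex set $W$ such that every two adjacent vertices are resolved by some element of $W$; a local metric basis is a local resolving set of minimum cardinality, and $lmd(G)$ is that cardinality. *)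

theory Defs
  imports Main
begin

datatype cyc = Ca | Cb | Cc | Cd

type_synonym vert = "cyc \<times> nat"

text \<open>Vertices of S_n: (X, i) with 0 \<le> i < n stands for x_{i+1}, X in {a,b,c,d}.\<close>
definition verts :: "nat \<Rightarrow> vert set" where
  "verts n = UNIV \<times> {..<n}"

definition gen_edge :: "nat \<Rightarrow> vert \<Rightarrow> vert \<Rightarrow> bool" where
  "gen_edge n u v \<longleftrightarrow> (\<exists>i<n.
      (u = (Ca, i) \<and> v = (Ca, Suc i mod n)) \<or>
      (u = (Cb, i) \<and> v = (Cb, Suc i mod n)) \<or>
      (u = (Cc, i) \<and> v = (Cc, Suc i mod n)) \<or>
      (u = (Cd, i) \<and> v = (Cd, Suc i mod n)) \<or>
      (u = (Ca, Suc i mod n) \<and> v = (Cb, i)) \<or>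
      (u = (Ca, i) \<and> v = (Cb, i)) \<or>
      (u = (Cb, i) \<and> v = (Cc, i)) \<or>
      (u = (Cc, i) \<and> v = (Cd, i)))"

definition adj :: "nat \<Rightarrow> vert \<Rightarrow> vert \<Rightarrow> bool" where
  "adj n u v \<longleftrightarrow> gen_edge n u v \<or> gen_edge n v u"

fun walk :: "nat \<Rightarrow> nat \<Rightarrow> vert \<Rightarrow> vert \<Rightarrow> bool" where
  "walk n 0 u v \<longleftrightarrow> u = v \<and> u \<in> verts n"
| "walk n (Suc k) u v \<longleftrightarrow> (\<exists>w. adj n u w \<and> walk n k w v)"

definition sdist :: "nat \<Rightarrow> vert \<Rightarrow> vert \<Rightarrow> nat" where
  "sdist n u v = (LEAST k. walk n k u v)"

definition local_resolving :: "nat \<Rightarrow> vert set \<Rightarrow> bool" where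
  "local_resolving n W \<longleftrightarrow> W \<subseteq> verts n \<and>
     (\<forall>u\<in>verts n. \<forall>v\<in>verts n. adj n u v \<longrightarrow>
        (\<exists>w\<in>W. sdist n u w \<noteq> sdist n v w))"

definition lmd :: "nat \<Rightarrow> nat" where
  "lmd n = (LEAST m. \<exists>W. local_resolving n W \<and> card W = m)"

definition local_metric_basis :: "nat \<Rightarrow> vert set \<Rightarrow> bool" where
  "local_metric_basis n W \<longleftrightarrow> local_resolving n W \<and> card W = lmd n"

end

theory Submission
  imports Defs
begin

text \<open>Distances in S_n are explicit. From a vertex of C_b, C_c or C_d a shortest path first
  moves along the rung b_i c_i d_i to the level of the target and then around the cycle, and
  C_a is joined to C_b by the edges a_i b_i and a_{i+1} b_i. With these formulas, for any two
  landmarks on different cycles one finds an edge whose ends are equidistant from both: a rung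
  a_i b_i, a diagonal a_i b_{i-1} or an edge of C_a, placed according to the offset of the
  landmarks around the cycle. The parity of n matters only when the landmarks are nearly
  antipodal on the cycle.\<close>

definition cyc_off :: "nat \<Rightarrow> nat \<Rightarrow> nat \<Rightarrow> nat" where
  "cyc_off n i j = nat ((int i - int j) mod int n)"

definition cyc_pred :: "nat \<Rightarrow> nat \<Rightarrow> nat" where
  "cyc_pred n i = (i + n - 1) mod n"

definition ring_dist :: "nat \<Rightarrow> nat \<Rightarrow> nat \<Rightarrow> nat" where
  "ring_dist n i j = min (cyc_off n i j) (n - cyc_off n i j)"

lemma int_cyc_off: "0 < n \<Longrightarrow> int (cyc_off n i j) = (int i - int j) mod int n"
  by (simp add: cyc_off_def)

lemma cyc_off_less: "0 < n \<Longrightarrow> cyc_off n i j < n"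
  unfolding cyc_off_def by (simp add: nat_less_iff)

lemma cyc_off_self [simp]: "cyc_off n i i = 0"
  unfolding cyc_off_def by simp

lemma cyc_off_eqI:
  assumes "m < n" and "(int a - int b) mod int n = int m mod int n"
  shows "cyc_off n a b = m"
  using assms by (simp add: cyc_off_def)

lemma cyc_off_eq_0_iff:
  assumes "i < n" and "j < n"
  shows "cyc_off n i j = 0 \<longleftrightarrow> i = j"
proof
  assume "cyc_off n i j = 0"
  then have "(int i - int j) mod int n = 0"
    using assms int_cyc_off[of n i j] by simp
  then have "int i mod int n = int j mod int n"
    by (simp add: mod_eq_dvd_iff dvd_eq_mod_eq_0)
  then show "i = j"
    using assms by simp
qed simp

lemma cyc_off_Suc:
  assumes "0 < n"
  shows "cyc_off n (Suc i mod n) j = (if cyc_off n i j + 1 = n then 0 else cyc_off n i j + 1)"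
proof -
  define m where "m = cyc_off n i j"
  have m: "m < n" "int m = (int i - int j) mod int n"
    using assms by (simp_all add: m_def cyc_off_less int_cyc_off)
  have step: "(int (Suc i mod n) - int j) mod int n = int (m + 1) mod int n"
    using assms by (simp add: m zmod_int mod_simps algebra_simps)
  show ?thesis
  proof (cases "m + 1 = n")
    case True
    then show ?thesis
      using step[unfolded True] assms by (simp add: m_def cyc_off_eqI)
  next
    case False
    then show ?thesis
      using step m(1) by (simp add: m_def[symmetric] cyc_off_eqI)
  qed
qed

lemma cyc_off_pred:
  assumes "0 < n"
  shows "cyc_off n (cyc_pred n i) j = (if cyc_off n i j = 0 then n - 1 else cyc_off n i j - 1)"
proof -
  have "(int (cyc_pred n i) - int j) mod int n = ((int i - int j) + (int n - 1)) mod int n"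
    using assms by (simp add: cyc_pred_def zmod_int of_nat_diff mod_simps algebra_simps)
  also have "\<dots> = (int (cyc_off n i j) + (int n - 1)) mod int n"
    using assms by (simp add: int_cyc_off mod_simps)
  finally have "(int (cyc_pred n i) - int j) mod int n = (int (cyc_off n i j) + (int n - 1)) mod int n" .
  also have "\<dots> = (int (cyc_off n i j) - 1 + int n) mod int n"
    by (simp add: algebra_simps)
  finally show ?thesis
    using assms cyc_off_less[OF assms, of i j] by (auto intro!: cyc_off_eqI simp: of_nat_diff)
qed

lemma cyc_off_swap:
  assumes "0 < n"
  shows "cyc_off n j i = (if cyc_off n i j = 0 then 0 else n - cyc_off n i j)"
proof -
  have "(int j - int i) mod int n = (int n - int (cyc_off n i j)) mod int n"
    using assms by (simp add: int_cyc_off mod_simps)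
  then show ?thesis
    using assms cyc_off_less[OF assms, of i j] by (auto intro!: cyc_off_eqI simp: of_nat_diff)
qed

lemma cyc_off_add: "0 < n \<Longrightarrow> cyc_off n ((p + k) mod n) p = k mod n"
  by (rule cyc_off_eqI) (simp_all add: zmod_int mod_simps)

lemma cyc_off_trans:
  assumes "0 < n"
  shows "cyc_off n i j = (cyc_off n i k + cyc_off n k j) mod n"
  using assms by (intro cyc_off_eqI) (simp_all add: int_cyc_off zmod_int mod_simps)

lemma cyc_pred_less: "0 < n \<Longrightarrow> cyc_pred n j < n"
  by (simp add: cyc_pred_def)

lemma Suc_cyc_pred_mod: "j < n \<Longrightarrow> Suc (cyc_pred n j) mod n = j"
  by (cases j) (auto simp: cyc_pred_def mod_Suc_eq)

lemma cyc_pred_Suc_mod: "i < n \<Longrightarrow> cyc_pred n (Suc i mod n) = i"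
  by (cases "Suc i = n") (auto simp: cyc_pred_def)

lemma ring_dist_Suc_mod:
  assumes "0 < n"
  shows "ring_dist n (Suc i mod n) q \<le> ring_dist n i q + 1"
    and "ring_dist n i q \<le> ring_dist n (Suc i mod n) q + 1"
  using cyc_off_less[OF assms, of i q]
  by (auto simp: ring_dist_def cyc_off_Suc[OF assms])

lemma ring_dist_cyc_pred:
  assumes "0 < n"
  shows "ring_dist n (cyc_pred n i) q \<le> ring_dist n i q + 1"
    and "ring_dist n i q \<le> ring_dist n (cyc_pred n i) q + 1"
  using cyc_off_less[OF assms, of i q]
  by (auto simp: ring_dist_def cyc_off_pred[OF assms])

lemma ring_dist_descent:
  assumes "0 < n" and "0 < ring_dist n j q"
  shows "ring_dist n (cyc_pred n j) q + 1 = ring_dist n j q \<or>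
         ring_dist n (Suc j mod n) q + 1 = ring_dist n j q"
  using assms cyc_off_less[OF assms(1), of j q]
  by (auto simp: ring_dist_def cyc_off_Suc[OF assms(1)] cyc_off_pred[OF assms(1)])

lemma ring_dist_eq_0_iff: "i < n \<Longrightarrow> j < n \<Longrightarrow> ring_dist n i j = 0 \<longleftrightarrow> i = j"
  using cyc_off_less[of n i j] cyc_off_eq_0_iff[of i n j] by (auto simp: ring_dist_def)

lemma adj_sym: "adj n x y \<Longrightarrow> adj n y x"
  unfolding adj_def by auto

lemma adj_in_verts: "adj n x y \<Longrightarrow> x \<in> verts n \<and> y \<in> verts n"
  unfolding adj_def gen_edge_def verts_def by auto

lemma adj_cycle: "j < n \<Longrightarrow> adj n (X, j) (X, Suc j mod n)"
  unfolding adj_def gen_edge_def by (cases X) blast+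

lemma adj_cycle_pred: "j < n \<Longrightarrow> adj n (X, j) (X, cyc_pred n j)"
  using adj_sym[OF adj_cycle[of "cyc_pred n j" n X]] by (simp add: cyc_pred_less Suc_cyc_pred_mod)

lemma adj_rung_ab: "j < n \<Longrightarrow> adj n (Ca, j) (Cb, j)"
  unfolding adj_def gen_edge_def by blast

lemma adj_diag_ab: "j < n \<Longrightarrow> adj n (Ca, j) (Cb, cyc_pred n j)"
  unfolding adj_def gen_edge_def using cyc_pred_less Suc_cyc_pred_mod
  by (metis gr_zeroI less_zeroE)

lemma adj_rung_bc: "j < n \<Longrightarrow> adj n (Cb, j) (Cc, j)"
  unfolding adj_def gen_edge_def by blast

lemma adj_rung_cd: "j < n \<Longrightarrow> adj n (Cc, j) (Cd, j)"
  unfolding adj_def gen_edge_def by blast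

lemma gen_edge_cases [consumes 1, case_names cycle diag rung_ab rung_bc rung_cd]:
  assumes "gen_edge n x y"
  obtains (cycle) X i where "i < n" "x = (X, i)" "y = (X, Suc i mod n)"
    | (diag) i where "i < n" "x = (Ca, Suc i mod n)" "y = (Cb, i)"
    | (rung_ab) i where "i < n" "x = (Ca, i)" "y = (Cb, i)"
    | (rung_bc) i where "i < n" "x = (Cb, i)" "y = (Cc, i)"
    | (rung_cd) i where "i < n" "x = (Cc, i)" "y = (Cd, i)"
  using assms unfolding gen_edge_def by blast

lemma walk_length_lower:
  assumes "h t = 0" and "\<And>x y. adj n x y \<Longrightarrow> h x \<le> h y + 1"
  shows "walk n k x t \<Longrightarrow> h x \<le> k"
proof (induction k arbitrary: x)
  case 0
  then show ?case using assms(1) by simp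
next
  case (Suc k)
  then obtain w where "adj n x w" "walk n k w t" by auto
  then show ?case using Suc.IH assms(2) by fastforce
qed

lemma walk_by_descent:
  assumes "t \<in> verts n" and "\<And>x. x \<in> verts n \<Longrightarrow> h x = 0 \<Longrightarrow> x = t"
    and "\<And>x. x \<in> verts n \<Longrightarrow> 0 < h x \<Longrightarrow> \<exists>y. adj n x y \<and> h y + 1 = h x"
  shows "x \<in> verts n \<Longrightarrow> walk n (h x) x t"
proof (induction "h x" arbitrary: x)
  case 0
  then show ?case using assms(1,2) by (metis walk.simps(1))
next
  case (Suc m)
  then obtain y where y: "adj n x y" "h y + 1 = h x" using assms(3) by (metis zero_less_Suc)
  then have "walk n (h y) y t" using Suc.hyps adj_in_verts[OF y(1)] by simp
  then show ?case using y by (metis add.commute plus_1_eq_Suc walk.simps(2))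
qed

lemma sdist_eqI:
  assumes "t \<in> verts n" and "h t = 0"
    and "\<And>x. x \<in> verts n \<Longrightarrow> h x = 0 \<Longrightarrow> x = t"
    and "\<And>x y. gen_edge n x y \<Longrightarrow> h x \<le> h y + 1 \<and> h y \<le> h x + 1"
    and "\<And>x. x \<in> verts n \<Longrightarrow> 0 < h x \<Longrightarrow> \<exists>y. adj n x y \<and> h y + 1 = h x"
    and "x \<in> verts n"
  shows "sdist n x t = h x"
  unfolding sdist_def
proof (rule Least_equality)
  show "walk n (h x) x t"
    using walk_by_descent assms(1,3,5,6) by blast
  have "\<And>x y. adj n x y \<Longrightarrow> h x \<le> h y + 1"
    using assms(4) unfolding adj_def by blast
  then show "\<And>k. walk n k x t \<Longrightarrow> h x \<le> k"
    using walk_length_lower assms(2) by blast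
qed

lemma cycle_step_towards:
  assumes "j < n" and "0 < ring_dist n j q"
  obtains j' where "adj n (X, j) (X, j')" and "ring_dist n j' q + 1 = ring_dist n j q"
  using ring_dist_descent[of n j q] assms adj_cycle adj_cycle_pred by (metis gr_zeroI less_zeroE)

text \<open>Level of a cycle along the rungs b_i c_i d_i; the value at \<open>Ca\<close> is never used.\<close>

fun depth :: "cyc \<Rightarrow> nat" where
  "depth Ca = 0" | "depth Cb = 0" | "depth Cc = 1" | "depth Cd = 2"

lemma rung_step_towards:
  assumes "X \<noteq> Ca" and "T \<noteq> Ca" and "X \<noteq> T" and "j < n"
  obtains Y where "Y \<noteq> Ca" and "adj n (X, j) (Y, j)"
    and "(depth Y - depth T) + (depth T - depth Y) + 1 = (depth X - depth T) + (depth T - depth X)"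
  using assms adj_rung_bc[of j n] adj_rung_cd[of j n] adj_sym
  by (cases X; cases T) (fastforce intro: that)+

text \<open>The two minima come from the neighbours b_j, b_{j-1} of a_j and a_j, a_{j+1} of b_j.\<close>

definition dist_to_bcd :: "nat \<Rightarrow> cyc \<Rightarrow> nat \<Rightarrow> vert \<Rightarrow> nat" where
  "dist_to_bcd n T q v = (case v of (X, j) \<Rightarrow>
     if X = Ca then 1 + depth T + min (ring_dist n j q) (ring_dist n (cyc_pred n j) q)
     else (depth X - depth T) + (depth T - depth X) + ring_dist n j q)"

lemma dist_to_bcd_gen_edge:
  assumes "gen_edge n x y"
  shows "dist_to_bcd n T q x \<le> dist_to_bcd n T q y + 1 \<and> dist_to_bcd n T q y \<le> dist_to_bcd n T q x + 1"
  using assms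
proof (cases rule: gen_edge_cases)
  case (cycle X i)
  then show ?thesis
    using ring_dist_Suc_mod[of n i q] ring_dist_cyc_pred[of n i q]
    by (auto simp: dist_to_bcd_def cyc_pred_Suc_mod)
next
  case (diag i)
  then show ?thesis
    using ring_dist_Suc_mod[of n i q] by (auto simp: dist_to_bcd_def cyc_pred_Suc_mod)
next
  case (rung_ab i)
  then show ?thesis
    using ring_dist_cyc_pred[of n i q] by (auto simp: dist_to_bcd_def)
qed (cases T; auto simp: dist_to_bcd_def)+

lemma dist_to_bcd_descent:
  assumes "T \<noteq> Ca" and "x \<in> verts n" and "0 < dist_to_bcd n T q x"
  shows "\<exists>y. adj n x y \<and> dist_to_bcd n T q y + 1 = dist_to_bcd n T q x"
proof -
  obtain X j where x: "x = (X, j)" and j: "j < n"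
    using assms(2) unfolding verts_def by auto
  consider "X = Ca" | "X \<noteq> Ca" "X \<noteq> T" | "X = T"
    by blast
  then show ?thesis
  proof cases
    case 1
    then show ?thesis
      using x adj_rung_ab[OF j] adj_diag_ab[OF j] assms(1)
      by (cases "ring_dist n j q \<le> ring_dist n (cyc_pred n j) q")
        (fastforce simp: dist_to_bcd_def min_def)+
  next
    case 2
    then obtain Y where "Y \<noteq> Ca" "adj n (X, j) (Y, j)"
      "(depth Y - depth T) + (depth T - depth Y) + 1 = (depth X - depth T) + (depth T - depth X)"
      using rung_step_towards assms(1) j by metis
    then show ?thesis
      using 2 x by (intro exI[of _ "(Y, j)"]) (auto simp: dist_to_bcd_def)
  next
    case 3
    then have "0 < ring_dist n j q"
      using assms x by (simp add: dist_to_bcd_def)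
    then obtain j' where "adj n (X, j) (X, j')" "ring_dist n j' q + 1 = ring_dist n j q"
      using cycle_step_towards j by metis
    then show ?thesis
      using 3 assms(1) x by (intro exI[of _ "(X, j')"]) (auto simp: dist_to_bcd_def)
  qed
qed

lemma sdist_to_bcd:
  assumes "T \<noteq> Ca" and "q < n" and "x \<in> verts n"
  shows "sdist n x (T, q) = dist_to_bcd n T q x"
proof (rule sdist_eqI[OF _ _ _ dist_to_bcd_gen_edge dist_to_bcd_descent[OF assms(1)] assms(3)])
  show "(T, q) \<in> verts n"
    using assms(2) unfolding verts_def by simp
  show "dist_to_bcd n T q (T, q) = 0"
    using assms(1) by (simp add: dist_to_bcd_def ring_dist_def)
  fix y
  assume "y \<in> verts n" and "dist_to_bcd n T q y = 0"
  moreover obtain Y j where "y = (Y, j)" by fastforce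
  ultimately show "y = (T, q)"
    using assms(1,2) ring_dist_eq_0_iff[of j n q]
    by (cases Y; cases T) (auto simp: dist_to_bcd_def verts_def split: if_splits)
qed

definition dist_to_a :: "nat \<Rightarrow> nat \<Rightarrow> vert \<Rightarrow> nat" where
  "dist_to_a n p v = (case v of (X, j) \<Rightarrow>
     if X = Ca then ring_dist n j p
     else depth X + 1 + min (ring_dist n j p) (ring_dist n (Suc j mod n) p))"

lemma dist_to_a_gen_edge:
  assumes "gen_edge n x y"
  shows "dist_to_a n p x \<le> dist_to_a n p y + 1 \<and> dist_to_a n p y \<le> dist_to_a n p x + 1"
  using assms
proof (cases rule: gen_edge_cases)
  case (cycle X i)
  then show ?thesis
    using ring_dist_Suc_mod[of n i p] ring_dist_Suc_mod[of n "Suc i mod n" p]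
    by (auto simp: dist_to_a_def)
next
  case (diag i)
  then show ?thesis
    using ring_dist_Suc_mod[of n i p] by (auto simp: dist_to_a_def)
next
  case (rung_ab i)
  then show ?thesis
    using ring_dist_Suc_mod[of n i p] by (auto simp: dist_to_a_def)
qed (auto simp: dist_to_a_def)

lemma dist_to_a_descent:
  assumes "x \<in> verts n" and "0 < dist_to_a n p x"
  shows "\<exists>y. adj n x y \<and> dist_to_a n p y + 1 = dist_to_a n p x"
proof -
  obtain X j where x: "x = (X, j)" and j: "j < n"
    using assms(1) unfolding verts_def by auto
  have diag: "adj n (Cb, j) (Ca, Suc j mod n)"
    using adj_sym[OF adj_diag_ab[of "Suc j mod n" n]] j by (simp add: cyc_pred_Suc_mod)
  show ?thesis
  proof (cases X)
    case Ca
    then have "0 < ring_dist n j p"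
      using assms(2) x by (simp add: dist_to_a_def)
    then obtain j' where "adj n (Ca, j) (Ca, j')" "ring_dist n j' p + 1 = ring_dist n j p"
      using cycle_step_towards j by metis
    then show ?thesis
      using Ca x by (intro exI[of _ "(Ca, j')"]) (auto simp: dist_to_a_def)
  next
    case Cb
    then show ?thesis
      using x diag adj_sym[OF adj_rung_ab[OF j]]
      by (cases "ring_dist n j p \<le> ring_dist n (Suc j mod n) p")
        (fastforce simp: dist_to_a_def min_def)+
  next
    case Cc
    then show ?thesis
      using x adj_sym[OF adj_rung_bc[OF j]]
      by (intro exI[of _ "(Cb, j)"]) (auto simp: dist_to_a_def)
  next
    case Cd
    then show ?thesis
      using x adj_sym[OF adj_rung_cd[OF j]]
      by (intro exI[of _ "(Cc, j)"]) (auto simp: dist_to_a_def)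
  qed
qed

lemma sdist_to_a:
  assumes "p < n" and "x \<in> verts n"
  shows "sdist n x (Ca, p) = dist_to_a n p x"
proof (rule sdist_eqI[OF _ _ _ dist_to_a_gen_edge dist_to_a_descent assms(2)])
  show "(Ca, p) \<in> verts n"
    using assms(1) unfolding verts_def by simp
  show "dist_to_a n p (Ca, p) = 0"
    by (simp add: dist_to_a_def ring_dist_def)
  fix y
  assume "y \<in> verts n" and "dist_to_a n p y = 0"
  moreover obtain Y j where "y = (Y, j)" by fastforce
  ultimately show "y = (Ca, p)"
    using assms(1) ring_dist_eq_0_iff[of j n p]
    by (auto simp: dist_to_a_def verts_def split: if_splits)
qed

lemma sdist_rung_ab_to_bcd_eq:
  assumes "T \<noteq> Ca" and "q < n" and "i < n" and "1 \<le> cyc_off n i q" and "2 * cyc_off n i q \<le> n"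
  shows "sdist n (Ca, i) (T, q) = sdist n (Cb, i) (T, q)"
proof -
  have n: "0 < n" using assms(3) by simp
  have "dist_to_bcd n T q (Ca, i) = dist_to_bcd n T q (Cb, i)"
    using assms(4,5) cyc_off_less[OF n, of i q]
    by (auto simp: dist_to_bcd_def ring_dist_def cyc_off_pred[OF n])
  then show ?thesis
    using sdist_to_bcd assms(1-3) unfolding verts_def by simp
qed

lemma sdist_diag_ab_to_bcd_eq:
  assumes "even n" and "T \<noteq> Ca" and "q < n" and "i < n"
    and "cyc_off n i q = 0 \<or> n < 2 * cyc_off n i q"
  shows "sdist n (Ca, i) (T, q) = sdist n (Cb, cyc_pred n i) (T, q)"
proof -
  have n: "0 < n" using assms(4) by simp
  have "n < 2 * cyc_off n i q \<Longrightarrow> n + 2 \<le> 2 * cyc_off n i q"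
    using assms(1) by presburger
  then have "dist_to_bcd n T q (Ca, i) = dist_to_bcd n T q (Cb, cyc_pred n i)"
    using assms(1,5) n cyc_off_less[OF n, of i q]
    by (auto simp: dist_to_bcd_def ring_dist_def cyc_off_pred[OF n])
  then show ?thesis
    using sdist_to_bcd assms(2-4) cyc_pred_less[OF n] unfolding verts_def by simp
qed

lemma sdist_cycle_a_to_bcd_eq:
  assumes "T \<noteq> Ca" and "q < n" and "i < n" and "cyc_off n i q = 0 \<or> 2 * cyc_off n i q = n"
  shows "sdist n (Ca, i) (T, q) = sdist n (Ca, Suc i mod n) (T, q)"
proof -
  have n: "0 < n" using assms(3) by simp
  have "dist_to_bcd n T q (Ca, i) = dist_to_bcd n T q (Ca, Suc i mod n)"
    using assms(4) cyc_off_less[OF n, of i q]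
    by (auto simp: dist_to_bcd_def ring_dist_def cyc_off_pred[OF n] cyc_off_Suc[OF n]
        cyc_pred_Suc_mod[OF assms(3)])
  then show ?thesis
    using sdist_to_bcd assms(1-3) n unfolding verts_def by simp
qed

lemma sdist_rung_ab_to_a_eq:
  assumes "p < n" and "i < n" and "n \<le> 2 * cyc_off n i p"
  shows "sdist n (Ca, i) (Ca, p) = sdist n (Cb, i) (Ca, p)"
proof -
  have n: "0 < n" using assms(2) by simp
  have "dist_to_a n p (Ca, i) = dist_to_a n p (Cb, i)"
    using assms(3) cyc_off_less[OF n, of i p]
    by (auto simp: dist_to_a_def ring_dist_def cyc_off_Suc[OF n])
  then show ?thesis
    using sdist_to_a assms(1,2) unfolding verts_def by simp
qed

lemma sdist_diag_ab_to_a_eq: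
  assumes "p < n" and "i < n" and "1 \<le> cyc_off n i p" and "2 * cyc_off n i p \<le> n"
  shows "sdist n (Ca, i) (Ca, p) = sdist n (Cb, cyc_pred n i) (Ca, p)"
proof -
  have n: "0 < n" using assms(2) by simp
  have "dist_to_a n p (Ca, i) = dist_to_a n p (Cb, cyc_pred n i)"
    using assms(3,4) cyc_off_less[OF n, of i p]
    by (auto simp: dist_to_a_def ring_dist_def cyc_off_pred[OF n] Suc_cyc_pred_mod[OF assms(2)])
  then show ?thesis
    using sdist_to_a assms(1,2) cyc_pred_less[OF n] unfolding verts_def by simp
qed

lemma equidistant_edge_not_local_resolving:
  assumes "adj n u v" and "sdist n u s = sdist n v s" and "sdist n u t = sdist n v t"
  shows "\<not> local_resolving n {s, t}"
  using assms adj_in_verts[OF assms(1)] unfolding local_resolving_def by blast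

lemma not_local_resolving_bcd_pair:
  assumes "even n" and "4 \<le> n" and "T1 \<noteq> Ca" and "T2 \<noteq> Ca" and "p < n" and "q < n"
  shows "\<not> local_resolving n {(T1, p), (T2, q)}"
proof -
  have n: "0 < n" using assms(2) by simp
  define r where "r = cyc_off n p q"
  have r: "r < n"
    using cyc_off_less[OF n] r_def by blast
  have qp: "cyc_off n q p = (if r = 0 then 0 else n - r)"
    using cyc_off_swap[OF n, of q p] r_def by simp
  have Suc_p: "cyc_off n (Suc p mod n) p = 1" and Suc_q: "cyc_off n (Suc q mod n) q = 1"
    using assms(2) by (simp_all add: cyc_off_Suc[OF n])
  have Suc_less: "Suc p mod n < n" "Suc q mod n < n"
    using n by simp_all
  consider "2 * r = n" | "r = 0 \<or> n < 2 * r" | "0 < r" "2 * r < n"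
    by linarith
  then show ?thesis
  proof cases
    case 1
    have "sdist n (Ca, q) (T1, p) = sdist n (Ca, Suc q mod n) (T1, p)"
      using 1 qp n by (intro sdist_cycle_a_to_bcd_eq assms) auto
    moreover have "sdist n (Ca, q) (T2, q) = sdist n (Ca, Suc q mod n) (T2, q)"
      by (intro sdist_cycle_a_to_bcd_eq assms) simp
    ultimately show ?thesis
      by (rule equidistant_edge_not_local_resolving[OF adj_cycle[OF assms(6)]])
  next
    case 2
    then have "n < 2 * r \<Longrightarrow> n + 2 \<le> 2 * r"
      using assms(1) by presburger
    then have "sdist n (Ca, Suc q mod n) (T1, p) = sdist n (Cb, Suc q mod n) (T1, p)"
      using 2 qp r assms(2)
      by (intro sdist_rung_ab_to_bcd_eq assms Suc_less) (auto simp: cyc_off_Suc[OF n])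
    moreover have "sdist n (Ca, Suc q mod n) (T2, q) = sdist n (Cb, Suc q mod n) (T2, q)"
      using Suc_q assms(2) by (intro sdist_rung_ab_to_bcd_eq assms Suc_less) auto
    ultimately show ?thesis
      by (rule equidistant_edge_not_local_resolving[OF adj_rung_ab[OF Suc_less(2)]])
  next
    case 3
    then have "2 * r + 2 \<le> n"
      using assms(1) by presburger
    then have "sdist n (Ca, Suc p mod n) (T2, q) = sdist n (Cb, Suc p mod n) (T2, q)"
      using 3 r by (intro sdist_rung_ab_to_bcd_eq assms Suc_less) (auto simp: cyc_off_Suc[OF n] r_def)
    moreover have "sdist n (Ca, Suc p mod n) (T1, p) = sdist n (Cb, Suc p mod n) (T1, p)"
      using Suc_p assms(2) by (intro sdist_rung_ab_to_bcd_eq assms Suc_less) auto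
    ultimately show ?thesis
      using equidistant_edge_not_local_resolving[OF adj_rung_ab[OF Suc_less(1)]]
      by (metis insert_commute)
  qed
qed

lemma not_local_resolving_a_bcd_pair:
  assumes "even n" and "4 \<le> n" and "T \<noteq> Ca" and "p < n" and "q < n"
  shows "\<not> local_resolving n {(Ca, p), (T, q)}"
proof -
  have n: "0 < n" using assms(2) by simp
  define r where "r = cyc_off n q p"
  define antipode where "antipode = (p + n div 2) mod n"
  have r: "r < n"
    using cyc_off_less[OF n] r_def by blast
  have antipode: "antipode < n" "cyc_off n antipode p = n div 2"
    using n cyc_off_add[OF n, of p "n div 2"] by (simp_all add: antipode_def)
  have Suc_q: "Suc q mod n < n" "cyc_off n (Suc q mod n) q = 1"
    using assms(2) by (simp_all add: cyc_off_Suc[OF n])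
  consider "1 \<le> r" "2 * r \<le> n" | "n \<le> 2 * r + 2" "r + 2 \<le> n" | "r = 0" | "r = n - 1"
    using r by (cases "r = 0"; cases "2 * r \<le> n"; cases "r + 2 \<le> n") auto
  then show ?thesis
  proof cases
    case 1
    have "sdist n (Ca, q) (Ca, p) = sdist n (Cb, cyc_pred n q) (Ca, p)"
      using 1 by (intro sdist_diag_ab_to_a_eq assms) (simp_all add: r_def)
    moreover have "sdist n (Ca, q) (T, q) = sdist n (Cb, cyc_pred n q) (T, q)"
      by (intro sdist_diag_ab_to_bcd_eq assms) simp
    ultimately show ?thesis
      by (rule equidistant_edge_not_local_resolving[OF adj_diag_ab[OF assms(5)]])
  next
    case 2
    have "sdist n (Ca, Suc q mod n) (Ca, p) = sdist n (Cb, Suc q mod n) (Ca, p)"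
      using 2 by (intro sdist_rung_ab_to_a_eq assms Suc_q) (simp add: cyc_off_Suc[OF n] r_def[symmetric])
    moreover have "sdist n (Ca, Suc q mod n) (T, q) = sdist n (Cb, Suc q mod n) (T, q)"
      using Suc_q assms(2) by (intro sdist_rung_ab_to_bcd_eq assms) auto
    ultimately show ?thesis
      by (rule equidistant_edge_not_local_resolving[OF adj_rung_ab[OF Suc_q(1)]])
  next
    case 3
    then have "q = p"
      using cyc_off_eq_0_iff[OF assms(5,4)] r_def by simp
    have "sdist n (Ca, antipode) (Ca, p) = sdist n (Cb, antipode) (Ca, p)"
      using antipode assms(1) by (intro sdist_rung_ab_to_a_eq assms) simp_all
    moreover have "sdist n (Ca, antipode) (T, q) = sdist n (Cb, antipode) (T, q)"
      using antipode assms(2) \<open>q = p\<close> by (intro sdist_rung_ab_to_bcd_eq assms) auto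
    ultimately show ?thesis
      by (rule equidistant_edge_not_local_resolving[OF adj_rung_ab[OF antipode(1)]])
  next
    case 4
    then have "cyc_off n p q = 1"
      using cyc_off_swap[OF n, of p q] r_def assms(2) by simp
    then have "cyc_off n antipode q = n div 2 + 1"
      using cyc_off_trans[OF n, of antipode q p] antipode assms(1,2) by simp
    then have "sdist n (Ca, antipode) (T, q) = sdist n (Cb, cyc_pred n antipode) (T, q)"
      using assms(1,2) by (intro sdist_diag_ab_to_bcd_eq assms antipode) auto
    moreover have "sdist n (Ca, antipode) (Ca, p) = sdist n (Cb, cyc_pred n antipode) (Ca, p)"
      using antipode assms(2) by (intro sdist_diag_ab_to_a_eq assms) auto
    ultimately show ?thesis
      using equidistant_edge_not_local_resolving[OF adj_diag_ab[OF antipode(1)]]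
      by (metis insert_commute)
  qed
qed

text \<open>Such a pair is not even a local resolving set.\<close>

theorem lemma3p4:
  fixes n k :: nat
  assumes "n = 2 * k" and "k \<ge> 2" and "lmd n = 2"
  shows "\<not> (\<exists>W X Y p q. local_metric_basis n W \<and> W = {(X, p), (Y, q)} \<and>
                 X \<noteq> Y \<and> p < n \<and> q < n)"
proof
  assume "\<exists>W X Y p q. local_metric_basis n W \<and> W = {(X, p), (Y, q)} \<and>
                 X \<noteq> Y \<and> p < n \<and> q < n"
  then obtain X Y p q where resolving: "local_resolving n {(X, p), (Y, q)}"
    and "X \<noteq> Y" and "p < n" and "q < n"
    unfolding local_metric_basis_def by blast
  have "even n" and "4 \<le> n"
    using assms(1,2) by simp_all
  consider "X = Ca" | "Y = Ca" | "X \<noteq> Ca" "Y \<noteq> Ca"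
    by blast
  then show False
  proof cases
    case 1
    then show False
      using resolving not_local_resolving_a_bcd_pair[of n Y p q] \<open>X \<noteq> Y\<close> \<open>p < n\<close> \<open>q < n\<close>
        \<open>even n\<close> \<open>4 \<le> n\<close> by simp
  next
    case 2
    then show False
      using resolving not_local_resolving_a_bcd_pair[of n X q p] \<open>X \<noteq> Y\<close> \<open>p < n\<close> \<open>q < n\<close>
        \<open>even n\<close> \<open>4 \<le> n\<close> by (simp add: insert_commute)
  next
    case 3
    then show False
      using resolving not_local_resolving_bcd_pair[of n X Y p q] \<open>p < n\<close> \<open>q < n\<close>
        \<open>even n\<close> \<open>4 \<le> n\<close> by simp
  qed
qed

end
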